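(* Let $a,c\in\mathbb{Z}$, $k,m,n\in\mathbb{N}$ with $km>n\ge1$, $t=\gcd(n,k)$, $n=n_1t$, $k=k_1t$, and $u_1,u_2\in\mathbb{Z}$ with $ku_1+nu_2=t$. Let $p$ be a prime with $p\nmid ackm(km-n)$ and $p\mid(\mathcal{C}-\mathcal{E})$. Let $\alpha_1,\alpha_2\in\mathbb{Z}$ satisfy $(km-n)\alpha_1\equiv nc\pmod{p^2}$ and $a(km-n)^m\alpha_2\equiv(kmc)^m\pmod{p^2}$, and let $\alpha\in\mathbb{Z}$ with $\alpha\equiv\alpha_1^{u_1}\alpha_2^{u_2}\pmod{p^2}$. Then $(\alpha^{k_1}+c)^m-a\alpha^{n_1}\equiv0\pmod{p^2}$ if and only if $\alpha_1^{n_1}\equiv\alpha_2^{k_1}\pmod{p^2}$.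
   Context: $\mathcal{C}=(km)^{k_1m}c^{k_1m-n_1}$, $\mathcal{E}=a^{k_1}n^{n_1}(km-n)^{k_1m-n_1}$. Since $\alpha_1,\alpha_2$ are units modulo $p^2$, negative powers are taken in $(\mathbb{Z}/p^2\mathbb{Z})^\times$. *)

theory Defs
  imports "HOL-Number_Theory.Number_Theory"
begin

text \<open>Integer power modulo m: negative exponents use the modular inverse
  (meaningful when x is a unit modulo m, i.e. a power in (Z/mZ)^*).\<close>
definition zpow_mod :: "int \<Rightarrow> int \<Rightarrow> int \<Rightarrow> int" where
  "zpow_mod m x e = (if e \<ge> 0 then x ^ nat e else modular_inverse m x ^ nat (- e))"

end

theory Submission
  imports Defs
begin

text \<open>
  Write \<open>\<delta>\<close> for \<open>\<alpha>1^n1 \<alpha>2^-k1\<close>. The hypothesis \<open>p | C - E\<close> says exactly that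
  \<open>\<delta> \<equiv> 1 (mod p)\<close>, so \<open>\<delta> \<equiv> 1 + p e (mod p^2)\<close> for some \<open>e\<close>. From \<open>k1 u1 + n1 u2 = 1\<close>
  one gets \<open>\<alpha>^k1 \<equiv> \<alpha>1 \<delta>^-u2 \<equiv> \<alpha>1 (1 - u2 p e)\<close> and \<open>\<alpha>^n1 \<equiv> \<alpha>2 \<delta>^u1 \<equiv> \<alpha>2 (1 + u1 p e)\<close>
  modulo \<open>p^2\<close>. With \<open>X = \<alpha>1 + c\<close> one has \<open>a \<alpha>2 \<equiv> X^m\<close>, and the binomial expansion
  modulo \<open>p^2\<close> gives \<open>(\<alpha>^k1 + c)^m - a \<alpha>^n1 \<equiv> - p e X^(m-1) (m u2 \<alpha>1 + u1 X)\<close>.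
  Multiplying the last factor by \<open>km - n\<close> turns it into \<open>m c t\<close> modulo \<open>p\<close>, so every factor
  except \<open>e\<close> is a unit modulo \<open>p\<close>, and both sides of the equivalence say \<open>p | e\<close>.
\<close>

lemma power_add_mult_cong_square:
  fixes X P Y :: int
  shows "[(X + P * Y) ^ Suc m = X ^ Suc m + int (Suc m) * X ^ m * P * Y] (mod P^2)"
proof (induction m)
  case 0
  show ?case by simp
next
  case (Suc m)
  have "[(X + P * Y) ^ Suc (Suc m) = (X + P * Y) * (X ^ Suc m + int (Suc m) * X ^ m * P * Y)] (mod P^2)"
    unfolding power_Suc[of _ "Suc m"] by (intro cong_mult cong_refl Suc.IH)
  also have "(X + P * Y) * (X ^ Suc m + int (Suc m) * X ^ m * P * Y)
      = X ^ Suc (Suc m) + int (Suc (Suc m)) * X ^ Suc m * P * Y + P^2 * (int (Suc m) * X ^ m * Y^2)"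
    by (simp add: algebra_simps power2_eq_square)
  also have "[\<dots> = X ^ Suc (Suc m) + int (Suc (Suc m)) * X ^ Suc m * P * Y] (mod P^2)"
    by (simp add: cong_iff_dvd_diff)
  finally show ?case .
qed

lemma one_plus_mult_power_cong_square:
  fixes P e :: int
  shows "[(1 + P * e) ^ b = 1 + int b * P * e] (mod P^2)"
  using power_add_mult_cong_square[of 1 P e "b - 1"] by (cases b) auto

lemma cong_imp_cong_square_one_plus:
  fixes x y P :: int
  assumes "coprime y P" and "[x = y] (mod P)"
  obtains e where "[x = y * (1 + P * e)] (mod P^2)"
proof -
  obtain f where f: "x = y + P * f"
    using assms(2) by (metis cong_iff_dvd_diff cong_sym dvd_def add_diff_cancel_left' diff_add_cancel)
  define y' where "y' = modular_inverse P y"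
  obtain g where g: "y * y' = 1 + P * g"
    using cong_modular_inverse1[OF assms(1)] unfolding y'_def
    by (metis cong_iff_dvd_diff cong_sym dvd_def add_diff_cancel_left' diff_add_cancel)
  have "y * (1 + P * (y' * f)) = x + P^2 * (f * g)"
    using f g by (simp add: algebra_simps power2_eq_square)
  then have "[x = y * (1 + P * (y' * f))] (mod P^2)"
    by (simp add: cong_iff_dvd_diff)
  then show ?thesis by (rule that)
qed

lemma cong_square_one_plus_swap:
  fixes x y P e :: int
  assumes "[x = y * (1 + P * e)] (mod P^2)"
  shows "[y = x * (1 + P * (- e))] (mod P^2)"
proof -
  have "[x * (1 - P * e) = y * (1 + P * e) * (1 - P * e)] (mod P^2)"
    by (intro cong_mult cong_refl assms)
  also have "y * (1 + P * e) * (1 - P * e) = y - P^2 * (y * e^2)"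
    by (simp add: algebra_simps power2_eq_square)
  also have "[\<dots> = y] (mod P^2)"
    by (simp add: cong_iff_dvd_diff)
  finally show ?thesis by (simp add: cong_sym)
qed

lemma cong_square_one_plus_iff:
  fixes x y P e :: int
  assumes "prime P" and "\<not> P dvd y" and "[x = y * (1 + P * e)] (mod P^2)"
  shows "[x = y] (mod P^2) \<longleftrightarrow> P dvd e"
proof -
  have "[x = y] (mod P^2) \<longleftrightarrow> [y * (1 + P * e) = y] (mod P^2)"
    using assms(3) by (meson cong_sym cong_trans)
  also have "\<dots> \<longleftrightarrow> P * P dvd P * (y * e)"
    by (simp add: cong_iff_dvd_diff power2_eq_square algebra_simps)
  also have "\<dots> \<longleftrightarrow> P dvd e"
    using assms(1,2) by (simp add: prime_dvd_mult_iff)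
  finally show ?thesis .
qed

lemma bezout_power_cong_square:
  fixes x y y' z P e :: int and k n a b :: nat
  assumes inv: "[y * y' = 1] (mod P^2)" and kab: "k * a = 1 + n * b"
    and xy: "[x ^ n = y ^ k * (1 + P * e)] (mod P^2)"
    and z: "[z = x ^ a * y' ^ b] (mod P^2)"
  shows "[z ^ k = x * (1 + int b * P * e)] (mod P^2)"
    and "[z ^ n = y * (1 + int a * P * e)] (mod P^2)"
proof -
  have "[x ^ n * y' ^ k = y ^ k * (1 + P * e) * y' ^ k] (mod P^2)"
    by (intro cong_mult cong_refl xy)
  also have "y ^ k * (1 + P * e) * y' ^ k = (y * y') ^ k * (1 + P * e)"
    by (simp add: power_mult_distrib)
  also have "[\<dots> = 1 ^ k * (1 + P * e)] (mod P^2)"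
    by (intro cong_mult cong_pow cong_refl inv)
  finally have ratio: "[x ^ n * y' ^ k = 1 + P * e] (mod P^2)"
    by simp
  have "[z ^ k = (x ^ a * y' ^ b) ^ k] (mod P^2)"
    by (intro cong_pow z)
  also have "(x ^ a * y' ^ b) ^ k = x ^ (k * a) * y' ^ (k * b)"
    by (simp add: power_mult_distrib mult.commute flip: power_mult)
  also have "\<dots> = x * (x ^ n * y' ^ k) ^ b"
    by (simp add: kab power_add power_mult_distrib flip: power_mult)
  also have "[\<dots> = x * (1 + P * e) ^ b] (mod P^2)"
    by (intro cong_mult cong_pow cong_refl ratio)
  also have "[x * (1 + P * e) ^ b = x * (1 + int b * P * e)] (mod P^2)"
    by (intro cong_mult cong_refl one_plus_mult_power_cong_square)
  finally show "[z ^ k = x * (1 + int b * P * e)] (mod P^2)" .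
  have "[z ^ n = 1 * (x ^ a * y' ^ b) ^ n] (mod P^2)"
    using cong_pow[OF z] by simp
  also have "[1 * (x ^ a * y' ^ b) ^ n = (y * y') * (x ^ a * y' ^ b) ^ n] (mod P^2)"
    by (intro cong_mult cong_refl cong_sym[OF inv])
  also have "(y * y') * (x ^ a * y' ^ b) ^ n = y * (x ^ (n * a) * y' ^ (1 + n * b))"
    by (simp add: power_mult_distrib mult.commute mult.left_commute flip: power_mult)
  also have "\<dots> = y * (x ^ n * y' ^ k) ^ a"
    by (simp only: flip: kab) (simp only: power_mult power_mult_distrib)
  also have "[\<dots> = y * (1 + P * e) ^ a] (mod P^2)"
    by (intro cong_mult cong_pow cong_refl ratio)
  also have "[y * (1 + P * e) ^ a = y * (1 + int a * P * e)] (mod P^2)"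
    by (intro cong_mult cong_refl one_plus_mult_power_cong_square)
  finally show "[z ^ n = y * (1 + int a * P * e)] (mod P^2)" .
qed

lemma bezout_cancel_common_factor:
  fixes u v :: int and k n t k1 n1 :: nat
  assumes "int k * u + int n * v = int t" and "k = k1 * t" and "n = n1 * t" and "0 < t"
  shows "int k1 * u + int n1 * v = 1"
proof -
  have "int t * (int k1 * u + int n1 * v) = int t * 1"
    using assms(1-3) by (simp add: algebra_simps)
  then show ?thesis
    using \<open>0 < t\<close> by simp
qed

lemma zpow_mod_nonneg: "0 \<le> e \<Longrightarrow> zpow_mod M x e = x ^ nat e"
  by (simp add: zpow_mod_def)

lemma zpow_mod_nonpos: "e \<le> 0 \<Longrightarrow> zpow_mod M x e = modular_inverse M x ^ nat (- e)"
  by (simp add: zpow_mod_def)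

lemma zpow_mod_bezout_cong_square:
  fixes x y z u v P e :: int and k n :: nat
  assumes "coprime x (P^2)" and "coprime y (P^2)" and "0 < k" and "0 < n"
    and bez: "int k * u + int n * v = 1"
    and xy: "[x ^ n = y ^ k * (1 + P * e)] (mod P^2)"
    and z: "[z = zpow_mod (P^2) x u * zpow_mod (P^2) y v] (mod P^2)"
  shows "[z ^ k = x * (1 - v * P * e)] (mod P^2) \<and> [z ^ n = y * (1 + u * P * e)] (mod P^2)"
proof -
  have "u \<le> 0 \<Longrightarrow> int k * u \<le> 0" "v \<le> 0 \<Longrightarrow> int n * v \<le> 0"
    "0 < u \<Longrightarrow> 0 < int k * u" "0 < v \<Longrightarrow> 0 < int n * v"
    using \<open>0 < k\<close> \<open>0 < n\<close> by (simp_all add: mult_nonneg_nonpos)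
  then consider "0 < u" "v \<le> 0" | "u \<le> 0" "0 < v"
    using bez by linarith
  then show ?thesis
  proof cases
    case 1
    have "int (k * nat u) = int (1 + n * nat (- v))"
      using 1 bez by simp
    then have kab: "k * nat u = 1 + n * nat (- v)"
      by (simp only: of_nat_eq_iff)
    have "[z = x ^ nat u * modular_inverse (P^2) y ^ nat (- v)] (mod P^2)"
      using z 1 by (simp add: zpow_mod_nonneg zpow_mod_nonpos)
    from bezout_power_cong_square[OF cong_modular_inverse1[OF \<open>coprime y (P^2)\<close>] kab xy this]
    show ?thesis
      using 1 by simp
  next
    case 2
    \<comment> \<open>the first case with the roles of \<open>x\<close> and \<open>y\<close> exchanged, which flips the sign of \<open>e\<close>\<close>
    have "int (n * nat v) = int (1 + k * nat (- u))"
      using 2 bez by simp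
    then have nab: "n * nat v = 1 + k * nat (- u)"
      by (simp only: of_nat_eq_iff)
    have "[z = y ^ nat v * modular_inverse (P^2) x ^ nat (- u)] (mod P^2)"
      using z 2 by (simp add: zpow_mod_nonneg zpow_mod_nonpos mult.commute)
    from bezout_power_cong_square[OF cong_modular_inverse1[OF \<open>coprime x (P^2)\<close>] nab
        cong_square_one_plus_swap[OF xy] this]
    show ?thesis
      using 2 by simp
  qed
qed

text \<open>In the hypothesis \<open>CE\<close>, \<open>K\<close> stands for \<open>km\<close> and \<open>N\<close> for \<open>km - n\<close>, so that it reads \<open>C \<equiv> E\<close>.\<close>

lemma power_cong_of_CE_cong:
  fixes a c n K N \<alpha>1 \<alpha>2 P :: int and m k1 n1 :: nat
  assumes "coprime (a * N) P" and "n1 \<le> k1 * m"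
    and \<alpha>1: "[N * \<alpha>1 = n * c] (mod P)"
    and \<alpha>2: "[a * N ^ m * \<alpha>2 = (K * c) ^ m] (mod P)"
    and CE: "[K ^ (k1 * m) * c ^ (k1 * m - n1) = a ^ k1 * n ^ n1 * N ^ (k1 * m - n1)] (mod P)"
  shows "[\<alpha>1 ^ n1 = \<alpha>2 ^ k1] (mod P)"
proof -
  have "a ^ k1 * N ^ (k1 * m) * \<alpha>1 ^ n1 = a ^ k1 * N ^ (k1 * m - n1) * (N * \<alpha>1) ^ n1"
    using \<open>n1 \<le> k1 * m\<close> by (simp add: power_mult_distrib algebra_simps flip: power_add)
  also have "[\<dots> = a ^ k1 * N ^ (k1 * m - n1) * (n * c) ^ n1] (mod P)"
    by (intro cong_mult cong_refl cong_pow \<alpha>1)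
  also have "a ^ k1 * N ^ (k1 * m - n1) * (n * c) ^ n1
      = c ^ n1 * (a ^ k1 * n ^ n1 * N ^ (k1 * m - n1))"
    by (simp add: power_mult_distrib algebra_simps)
  also have "[\<dots> = c ^ n1 * (K ^ (k1 * m) * c ^ (k1 * m - n1))] (mod P)"
    by (intro cong_mult cong_refl cong_sym[OF CE])
  also have "c ^ n1 * (K ^ (k1 * m) * c ^ (k1 * m - n1)) = (K * c) ^ (m * k1)"
    using \<open>n1 \<le> k1 * m\<close> by (simp add: power_mult_distrib algebra_simps flip: power_add)
  also have "[\<dots> = (a * N ^ m * \<alpha>2) ^ k1] (mod P)"
    unfolding power_mult by (intro cong_pow cong_sym[OF \<alpha>2])
  also have "(a * N ^ m * \<alpha>2) ^ k1 = a ^ k1 * N ^ (k1 * m) * \<alpha>2 ^ k1"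
    by (simp add: power_mult_distrib algebra_simps flip: power_mult)
  finally have "[a ^ k1 * N ^ (k1 * m) * \<alpha>1 ^ n1 = a ^ k1 * N ^ (k1 * m) * \<alpha>2 ^ k1] (mod P)" .
  moreover have "coprime (a ^ k1 * N ^ (k1 * m)) P"
    using \<open>coprime (a * N) P\<close> by simp
  ultimately show ?thesis
    by (simp add: cong_mult_lcancel mult.assoc)
qed

lemma units_and_power_cong_of_CE:
  fixes a c n K N \<alpha>1 \<alpha>2 P :: int and m k1 n1 :: nat
  assumes "prime P" and "\<not> P dvd a * c * K * N"
    and "0 < m" and "0 < k1" and "0 < n1" and "n1 \<le> k1 * m"
    and \<alpha>1: "[N * \<alpha>1 = n * c] (mod P)"
    and \<alpha>2: "[a * N ^ m * \<alpha>2 = (K * c) ^ m] (mod P)"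
    and CE: "P dvd K ^ (k1 * m) * c ^ (k1 * m - n1) - a ^ k1 * n ^ n1 * N ^ (k1 * m - n1)"
  shows "\<not> P dvd \<alpha>1" and "\<not> P dvd \<alpha>2" and "[\<alpha>1 ^ n1 = \<alpha>2 ^ k1] (mod P)"
proof -
  show "\<not> P dvd \<alpha>2"
    using cong_dvd_iff[OF \<alpha>2] assms(1-3) by (auto simp: prime_dvd_mult_iff prime_dvd_power_iff)
  have "\<not> P dvd a * N"
    using assms(1,2) by (auto simp: prime_dvd_mult_iff)
  then have "coprime (a * N) P"
    using prime_imp_coprime[OF assms(1)] by (metis coprime_commute)
  moreover have "[K ^ (k1 * m) * c ^ (k1 * m - n1) = a ^ k1 * n ^ n1 * N ^ (k1 * m - n1)] (mod P)"
    using CE by (simp add: cong_iff_dvd_diff dvd_diff_commute)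
  ultimately show cong: "[\<alpha>1 ^ n1 = \<alpha>2 ^ k1] (mod P)"
    using power_cong_of_CE_cong[OF _ \<open>n1 \<le> k1 * m\<close> \<alpha>1 \<alpha>2] by blast
  show "\<not> P dvd \<alpha>1"
    using cong_dvd_iff[OF cong] \<open>\<not> P dvd \<alpha>2\<close> assms(1,4,5) by (simp add: prime_dvd_power_iff)
qed

lemma cong_power_cancel_unit:
  fixes a c X K N \<alpha>2 M :: int and m :: nat
  assumes "coprime N M"
    and NX: "[N * X = K * c] (mod M)"
    and \<alpha>2: "[a * N ^ m * \<alpha>2 = (K * c) ^ m] (mod M)"
  shows "[a * \<alpha>2 = X ^ m] (mod M)"
proof -
  have "[a * N ^ m * \<alpha>2 = (N * X) ^ m] (mod M)"
    using \<alpha>2 cong_pow[OF cong_sym[OF NX]] by (rule cong_trans)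
  then have "[N ^ m * (a * \<alpha>2) = N ^ m * X ^ m] (mod M)"
    by (simp only: power_mult_distrib ac_simps)
  then show ?thesis
    using \<open>coprime N M\<close> by (simp add: cong_mult_lcancel)
qed

lemma power_sub_cong_square:
  fixes X Y Z V P :: int
  assumes "[Z = X ^ Suc m] (mod P^2)"
  shows "[(X + P * Y) ^ Suc m - Z * (1 + P * V) = P * (X ^ m * (int (Suc m) * Y - X * V))] (mod P^2)"
proof -
  have "[(X + P * Y) ^ Suc m - Z * (1 + P * V)
      = (X ^ Suc m + int (Suc m) * X ^ m * P * Y) - X ^ Suc m * (1 + P * V)] (mod P^2)"
    by (intro cong_diff cong_mult cong_refl power_add_mult_cong_square assms)
  also have "(X ^ Suc m + int (Suc m) * X ^ m * P * Y) - X ^ Suc m * (1 + P * V)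
      = P * (X ^ m * (int (Suc m) * Y - X * V))"
    by (simp add: algebra_simps)
  finally show ?thesis .
qed

lemma root_expression_cong_square:
  fixes a c \<alpha> \<alpha>1 \<alpha>2 u1 u2 P e :: int and m k1 n1 :: nat
  assumes aX: "[a * \<alpha>2 = (\<alpha>1 + c) ^ Suc m] (mod P^2)"
    and \<alpha>k: "[\<alpha> ^ k1 = \<alpha>1 * (1 - u2 * P * e)] (mod P^2)"
    and \<alpha>n: "[\<alpha> ^ n1 = \<alpha>2 * (1 + u1 * P * e)] (mod P^2)"
  shows "[(\<alpha> ^ k1 + c) ^ Suc m - a * \<alpha> ^ n1
      = - P * e * (\<alpha>1 + c) ^ m * (int (Suc m) * u2 * \<alpha>1 + u1 * (\<alpha>1 + c))] (mod P^2)"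
proof -
  have "[\<alpha> ^ k1 + c = (\<alpha>1 + c) + P * (- u2 * e * \<alpha>1)] (mod P^2)"
    using cong_add[OF \<alpha>k cong_refl[of c]] by (simp add: algebra_simps)
  moreover have "[a * \<alpha> ^ n1 = (a * \<alpha>2) * (1 + P * (u1 * e))] (mod P^2)"
    using cong_mult[OF cong_refl[of a] \<alpha>n] by (simp add: algebra_simps)
  ultimately have "[(\<alpha> ^ k1 + c) ^ Suc m - a * \<alpha> ^ n1
      = ((\<alpha>1 + c) + P * (- u2 * e * \<alpha>1)) ^ Suc m - (a * \<alpha>2) * (1 + P * (u1 * e))] (mod P^2)"
    by (intro cong_diff cong_pow)
  also have "[((\<alpha>1 + c) + P * (- u2 * e * \<alpha>1)) ^ Suc m - (a * \<alpha>2) * (1 + P * (u1 * e))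
      = P * ((\<alpha>1 + c) ^ m * (int (Suc m) * (- u2 * e * \<alpha>1) - (\<alpha>1 + c) * (u1 * e)))] (mod P^2)"
    by (rule power_sub_cong_square[OF aX])
  also have "P * ((\<alpha>1 + c) ^ m * (int (Suc m) * (- u2 * e * \<alpha>1) - (\<alpha>1 + c) * (u1 * e)))
      = - P * e * (\<alpha>1 + c) ^ m * (int (Suc m) * u2 * \<alpha>1 + u1 * (\<alpha>1 + c))"
    by (simp add: algebra_simps)
  finally show ?thesis .
qed

lemma root_cong_square_iff:
  fixes a c k n \<alpha> \<alpha>1 \<alpha>2 u1 u2 P e :: int and m k1 n1 :: nat
  assumes "prime P" and "0 < m"
    and "\<not> P dvd k * int m - n" and "\<not> P dvd k * int m * c" and "\<not> P dvd k * u1 + n * u2"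
    and \<alpha>1: "[(k * int m - n) * \<alpha>1 = n * c] (mod P^2)"
    and \<alpha>2: "[a * (k * int m - n) ^ m * \<alpha>2 = (k * int m * c) ^ m] (mod P^2)"
    and \<alpha>k: "[\<alpha> ^ k1 = \<alpha>1 * (1 - u2 * P * e)] (mod P^2)"
    and \<alpha>n: "[\<alpha> ^ n1 = \<alpha>2 * (1 + u1 * P * e)] (mod P^2)"
  shows "[(\<alpha> ^ k1 + c) ^ m - a * \<alpha> ^ n1 = 0] (mod P^2) \<longleftrightarrow> P dvd e"
proof -
  obtain m' where m: "m = Suc m'"
    using \<open>0 < m\<close> gr0_implies_Suc by blast
  define N where "N = k * int m - n"
  define X where "X = \<alpha>1 + c"
  define W where "W = int m * u2 * \<alpha>1 + u1 * X"
  have "P dvd P^2"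
    by simp
  have "coprime N (P^2)"
    using \<open>prime P\<close> \<open>\<not> P dvd k * int m - n\<close> unfolding N_def
    by (simp add: prime_imp_coprime coprime_commute)
  have NX: "[N * X = k * int m * c] (mod P^2)"
    using cong_add[OF \<alpha>1 cong_refl[of "N * c"]] by (simp add: N_def X_def algebra_simps)
  have "[a * \<alpha>2 = (\<alpha>1 + c) ^ Suc m'] (mod P^2)"
    using cong_power_cancel_unit[OF \<open>coprime N (P^2)\<close> NX \<alpha>2[folded N_def]] by (simp add: X_def m)
  from root_expression_cong_square[OF this \<alpha>k \<alpha>n]
  have R: "[(\<alpha> ^ k1 + c) ^ m - a * \<alpha> ^ n1 = P * (- e * X ^ m' * W)] (mod P^2)"
    by (simp add: m X_def W_def mult.assoc)
  have "N * W = int m * u2 * (N * \<alpha>1) + u1 * (N * X)"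
    by (simp add: W_def algebra_simps)
  also have "[\<dots> = int m * u2 * (n * c) + u1 * (k * int m * c)] (mod P)"
    using cong_dvd_modulus[OF \<alpha>1[folded N_def] \<open>P dvd P^2\<close>] cong_dvd_modulus[OF NX \<open>P dvd P^2\<close>]
    by (intro cong_add cong_mult[OF cong_refl])
  also have "int m * u2 * (n * c) + u1 * (k * int m * c) = int m * c * (k * u1 + n * u2)"
    by (simp add: algebra_simps)
  finally have NW: "[N * W = int m * c * (k * u1 + n * u2)] (mod P)" .
  have "\<not> P dvd X"
    using cong_dvd_iff[OF cong_dvd_modulus[OF NX \<open>P dvd P^2\<close>]] \<open>\<not> P dvd k * int m * c\<close>
    by (metis dvd_mult)
  have "[(\<alpha> ^ k1 + c) ^ m - a * \<alpha> ^ n1 = 0] (mod P^2) \<longleftrightarrow> P dvd e * X ^ m' * W"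
    using R \<open>prime P\<close> by (simp add: cong_0_iff cong_dvd_iff power2_eq_square)
  also have "\<dots> \<longleftrightarrow> P dvd e * X ^ m' * (N * W)"
    using \<open>prime P\<close> \<open>\<not> P dvd k * int m - n\<close> by (simp add: N_def prime_dvd_mult_iff)
  also have "\<dots> \<longleftrightarrow> P dvd e * X ^ m' * (int m * c * (k * u1 + n * u2))"
    using cong_dvd_iff[OF cong_scalar_left[OF NW, of "e * X ^ m'"]] by simp
  also have "\<dots> \<longleftrightarrow> P dvd e"
    using \<open>prime P\<close> \<open>\<not> P dvd X\<close> \<open>\<not> P dvd k * int m * c\<close> \<open>\<not> P dvd k * u1 + n * u2\<close>
    by (auto simp: prime_dvd_mult_iff dest: prime_dvd_power)
  finally show ?thesis .
qed

theorem mainTheorem14: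
  fixes a c u1 u2 \<alpha>1 \<alpha>2 \<alpha> :: int
    and k m n t n1 k1 p :: nat
  assumes "k * m > n" and "n \<ge> 1"
    and "t = gcd n k" and "n = n1 * t" and "k = k1 * t"
    and "int k * u1 + int n * u2 = int t"
    and "prime p"
    and "\<not> int p dvd a * c * int k * int m * (int (k * m) - int n)"
    and "int p dvd ((int (k * m)) ^ (k1 * m) * c ^ (k1 * m - n1)
                   - a ^ k1 * (int n) ^ n1 * (int (k * m) - int n) ^ (k1 * m - n1))"
    and "[(int (k * m) - int n) * \<alpha>1 = int n * c] (mod (int p ^ 2))"
    and "[a * (int (k * m) - int n) ^ m * \<alpha>2 = (int (k * m) * c) ^ m] (mod (int p ^ 2))"
    and "[\<alpha> = zpow_mod (int p ^ 2) \<alpha>1 u1 * zpow_mod (int p ^ 2) \<alpha>2 u2] (mod (int p ^ 2))"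
  shows "[(\<alpha> ^ k1 + c) ^ m - a * \<alpha> ^ n1 = 0] (mod (int p ^ 2))
         \<longleftrightarrow> [\<alpha>1 ^ n1 = \<alpha>2 ^ k1] (mod (int p ^ 2))"
proof -
  define P where "P = int p"
  note assms = assms[folded P_def, unfolded of_nat_mult]
  have "prime P"
    using \<open>prime p\<close> by (simp add: P_def)
  have "0 < t" "0 < m"
    using assms(1-3) by (auto intro: Nat.gr0I)
  have "n1 < k1 * m" "0 < n1"
    using assms(1,2,4,5) \<open>0 < t\<close> by auto
  then have "0 < k1" "n1 \<le> k1 * m"
    by (auto intro: Nat.gr0I)
  have "P dvd P^2"
    by simp
  have units: "\<not> P dvd \<alpha>1" "\<not> P dvd \<alpha>2" and modp: "[\<alpha>1 ^ n1 = \<alpha>2 ^ k1] (mod P)"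
    using units_and_power_cong_of_CE[OF \<open>prime P\<close> _ \<open>0 < m\<close> \<open>0 < k1\<close> \<open>0 < n1\<close> \<open>n1 \<le> k1 * m\<close>
        cong_dvd_modulus[OF assms(10) \<open>P dvd P^2\<close>] cong_dvd_modulus[OF assms(11) \<open>P dvd P^2\<close>] assms(9)]
      assms(8) by (simp_all add: ac_simps)
  then have "coprime \<alpha>1 (P^2)" "coprime \<alpha>2 (P^2)"
    using \<open>prime P\<close> by (simp_all add: prime_imp_coprime coprime_commute)
  obtain e where e: "[\<alpha>1 ^ n1 = \<alpha>2 ^ k1 * (1 + P * e)] (mod P^2)"
    using cong_imp_cong_square_one_plus[OF _ modp] \<open>coprime \<alpha>2 (P^2)\<close> by auto
  have "[\<alpha> ^ k1 = \<alpha>1 * (1 - u2 * P * e)] (mod P^2) \<and> [\<alpha> ^ n1 = \<alpha>2 * (1 + u1 * P * e)] (mod P^2)"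
    using zpow_mod_bezout_cong_square[OF \<open>coprime \<alpha>1 (P^2)\<close> \<open>coprime \<alpha>2 (P^2)\<close> \<open>0 < k1\<close> \<open>0 < n1\<close>
        bezout_cancel_common_factor[OF assms(6,5,4) \<open>0 < t\<close>] e assms(12)] .
  then have "[(\<alpha> ^ k1 + c) ^ m - a * \<alpha> ^ n1 = 0] (mod P^2) \<longleftrightarrow> P dvd e"
    using \<open>prime P\<close> \<open>0 < m\<close> assms(5,6,8,10,11)
    by (intro root_cong_square_iff) (auto simp: prime_dvd_mult_iff)
  also have "\<dots> \<longleftrightarrow> [\<alpha>1 ^ n1 = \<alpha>2 ^ k1] (mod P^2)"
    using cong_square_one_plus_iff[OF \<open>prime P\<close> _ e] \<open>prime P\<close> units(2) \<open>0 < k1\<close>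
    by (simp add: prime_dvd_power_iff)
  finally show ?thesis
    unfolding P_def .
qed

end
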